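(* If a finite algebra $\mathbf{A}$ is a spread of a family of subsets on which the induced algebras have Maltsev polynomials, then $d_{\mathbf{A}}(n)\in O(n)$.
   Context: $d_{\mathbf{A}}(n)$ is the least size of a generating set of $\mathbf{A}^n$. A subset $S\subseteq A$ is a spread of a family $\mathcal U$ of subsets of $A$ if $S=p(U_1,\dots,U_k)$ for a polynomial $p$ of $\mathbf{A}$ and (not necessarily distinct) $U_i\in\mathcal U$; $\mathbf{A}$ is a spread of $\mathcal U$ if $A$ is. For $U\subseteq A$ the induced algebra $\mathbf{A}|_U$ has universe $U$ and as operations the restrictions to $U$ of the polynomials of $\mathbf{A}$ under which $U$ is closed. A Maltsev polynomial is a polynomial $m(x,y,z)$ with $m(x,y,y)=x=m(y,y,x)$. *)

theory Defs
  imports Main "HOL-Library.Landau_Symbols"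
begin

text \<open>An algebra is given by its universe A :: 'a set and a set F of fundamental
operations, each a pair (arity, function on lists); an operation of arity m is
only ever applied to lists of length m.\<close>

definition tuples :: "'a set \<Rightarrow> nat \<Rightarrow> 'a list set" where
  "tuples A n = {xs. length xs = n \<and> set xs \<subseteq> A}"

definition is_algebra :: "'a set \<Rightarrow> (nat \<times> ('a list \<Rightarrow> 'a)) set \<Rightarrow> bool" where
  "is_algebra A F \<longleftrightarrow> A \<noteq> {} \<and> (\<forall>(m, f) \<in> F. \<forall>xs \<in> tuples A m. f xs \<in> A)"

inductive_set clo :: "(nat \<times> ('a list \<Rightarrow> 'a)) set \<Rightarrow> nat \<Rightarrow> ('a list \<Rightarrow> 'a) set"
  for F :: "(nat \<times> ('a list \<Rightarrow> 'a)) set" and k :: nat where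
  proj: "i < k \<Longrightarrow> (\<lambda>xs. xs ! i) \<in> clo F k"
| app: "(m, f) \<in> F \<Longrightarrow> length gs = m \<Longrightarrow> (\<forall>g \<in> set gs. g \<in> clo F k)
          \<Longrightarrow> (\<lambda>xs. f (map (\<lambda>g. g xs) gs)) \<in> clo F k"

inductive_set polys :: "'a set \<Rightarrow> (nat \<times> ('a list \<Rightarrow> 'a)) set \<Rightarrow> nat \<Rightarrow> ('a list \<Rightarrow> 'a) set"
  for A :: "'a set" and F :: "(nat \<times> ('a list \<Rightarrow> 'a)) set" and k :: nat where
  proj: "i < k \<Longrightarrow> (\<lambda>xs. xs ! i) \<in> polys A F k"
| const: "c \<in> A \<Longrightarrow> (\<lambda>xs. c) \<in> polys A F k"
| app: "(m, f) \<in> F \<Longrightarrow> length gs = m \<Longrightarrow> (\<forall>g \<in> set gs. g \<in> polys A F k)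
          \<Longrightarrow> (\<lambda>xs. f (map (\<lambda>g. g xs) gs)) \<in> polys A F k"

text \<open>Subuniverse of A^n generated by S (operations act coordinatewise).\<close>
definition sg :: "(nat \<times> ('a list \<Rightarrow> 'a)) set \<Rightarrow> nat \<Rightarrow> 'a list set \<Rightarrow> 'a list set" where
  "sg F n S = {map (\<lambda>i. t (map (\<lambda>s. s ! i) ss)) [0..<n] | t ss.
                 t \<in> clo F (length ss) \<and> set ss \<subseteq> S}"

definition generates :: "'a set \<Rightarrow> (nat \<times> ('a list \<Rightarrow> 'a)) set \<Rightarrow> nat \<Rightarrow> 'a list set \<Rightarrow> bool" where
  "generates A F n S \<longleftrightarrow> S \<subseteq> tuples A n \<and> sg F n S = tuples A n"

definition d_gen :: "'a set \<Rightarrow> (nat \<times> ('a list \<Rightarrow> 'a)) set \<Rightarrow> nat \<Rightarrow> nat" where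
  "d_gen A F n = (LEAST k. \<exists>S. finite S \<and> card S = k \<and> generates A F n S)"

definition poly_image :: "('a list \<Rightarrow> 'a) \<Rightarrow> 'a set list \<Rightarrow> 'a set" where
  "poly_image p Us = {p xs | xs. length xs = length Us \<and> (\<forall>i < length Us. xs ! i \<in> Us ! i)}"

definition is_spread :: "'a set \<Rightarrow> (nat \<times> ('a list \<Rightarrow> 'a)) set \<Rightarrow> 'a set set \<Rightarrow> 'a set \<Rightarrow> bool" where
  "is_spread A F \<U> S \<longleftrightarrow>
     (\<exists>p Us. p \<in> polys A F (length Us) \<and> set Us \<subseteq> \<U> \<and> S = poly_image p Us)"

text \<open>Operations of the induced algebra A|_U: (restrictions to U of) the polynomials
of A under which U is closed. Only their values on U are ever used.\<close>
definition induced_ops :: "'a set \<Rightarrow> (nat \<times> ('a list \<Rightarrow> 'a)) set \<Rightarrow> 'a set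
      \<Rightarrow> (nat \<times> ('a list \<Rightarrow> 'a)) set" where
  "induced_ops A F U = {(k, p). p \<in> polys A F k \<and> (\<forall>xs \<in> tuples U k. p xs \<in> U)}"

definition has_maltsev :: "'a set \<Rightarrow> (nat \<times> ('a list \<Rightarrow> 'a)) set \<Rightarrow> bool" where
  "has_maltsev B G \<longleftrightarrow> (\<exists>m \<in> polys B G 3. \<forall>x \<in> B. \<forall>y \<in> B.
       m [x, y, y] = x \<and> m [y, y, x] = x)"

end

theory Submission
  imports Defs
begin

text \<open>For n > 0 the near-constant tuples (c,...,c,a,c,...,c) with c, a in A, at most
|A|^2 n of them, generate A^n. Since they include the constant tuples, every polynomial
of A acts coordinatewise on the subalgebra they generate. On a set U with a Maltsev
polynomial m, a tuple x in U^n is assembled one coordinate at a time: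
m((x_1,...,x_k,c,...,c), (c,...,c), (c,...,c,x_(k+1),c,...,c)) = (x_1,...,x_(k+1),c,...,c).
Finally, if A = p(U_1,...,U_k), every tuple of A^n is p applied coordinatewise to
tuples from U_1^n, ..., U_k^n.\<close>

definition coordinatewise :: "nat \<Rightarrow> ('a list \<Rightarrow> 'a) \<Rightarrow> 'a list list \<Rightarrow> 'a list" where
  "coordinatewise n f ys = map (\<lambda>i. f (map (\<lambda>y. y ! i) ys)) [0..<n]"

lemma length_coordinatewise [simp]: "length (coordinatewise n f ys) = n"
  by (simp add: coordinatewise_def)

lemma nth_coordinatewise [simp]: "i < n \<Longrightarrow> coordinatewise n f ys ! i = f (map (\<lambda>y. y ! i) ys)"
  by (simp add: coordinatewise_def)

lemma coordinatewise_proj: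
  "i < length ys \<Longrightarrow> length (ys ! i) = n \<Longrightarrow> coordinatewise n (\<lambda>xs. xs ! i) ys = ys ! i"
  by (intro nth_equalityI) auto

lemma coordinatewise_const: "coordinatewise n (\<lambda>xs. c) ys = replicate n c"
  by (simp add: coordinatewise_def map_replicate_const)

lemma coordinatewise_comp:
  "coordinatewise n (\<lambda>xs. f (map (\<lambda>g. g xs) gs)) ys =
     coordinatewise n f (map (\<lambda>g. coordinatewise n g ys) gs)"
  by (intro nth_equalityI) (auto simp: comp_def)

inductive_set generated :: "(nat \<times> ('a list \<Rightarrow> 'a)) set \<Rightarrow> nat \<Rightarrow> 'a list set \<Rightarrow> 'a list set"
  for F :: "(nat \<times> ('a list \<Rightarrow> 'a)) set" and n :: nat and S :: "'a list set" where
  base: "s \<in> S \<Longrightarrow> s \<in> generated F n S"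
| app: "(m, f) \<in> F \<Longrightarrow> length ys = m \<Longrightarrow> \<forall>y \<in> set ys. y \<in> generated F n S
          \<Longrightarrow> coordinatewise n f ys \<in> generated F n S"

lemma length_generated:
  assumes "\<forall>s\<in>S. length s = n" "y \<in> generated F n S"
  shows "length y = n"
  using assms(2) by induction (use assms(1) in auto)

lemma clo_closed:
  assumes "is_algebra A F"
  shows "t \<in> clo F k \<Longrightarrow> xs \<in> tuples A k \<Longrightarrow> t xs \<in> A"
proof (induction t rule: clo.induct)
  case (app m f gs)
  then have "map (\<lambda>g. g xs) gs \<in> tuples A m" by (auto simp: tuples_def)
  then show ?case using assms app(1) unfolding is_algebra_def by auto
qed (auto simp: tuples_def)

lemma sg_subset_tuples:
  assumes "is_algebra A F" and "S \<subseteq> tuples A n"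
  shows "sg F n S \<subseteq> tuples A n"
proof
  fix y assume "y \<in> sg F n S"
  then obtain t ss where y: "y = coordinatewise n t ss"
    and t: "t \<in> clo F (length ss)" and ss: "set ss \<subseteq> S"
    unfolding sg_def coordinatewise_def by blast
  have "s ! i \<in> A" if "i < n" "s \<in> set ss" for i s
  proof -
    have "length s = n" "set s \<subseteq> A" using that ss assms(2) by (auto simp: tuples_def)
    then show ?thesis using that(1) nth_mem by blast
  qed
  then have "map (\<lambda>s. s ! i) ss \<in> tuples A (length ss)" if "i < n" for i
    using that by (auto simp: tuples_def)
  then have "y ! i \<in> A" if "i < n" for i
    using that clo_closed[OF assms(1) t] y by simp
  then show "y \<in> tuples A n" using y by (auto simp: tuples_def in_set_conv_nth)
qed

lemma choose_list:
  assumes "\<forall>y \<in> set ys. \<exists>t. P y t"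
  shows "\<exists>ts. length ts = length ys \<and> (\<forall>j < length ys. P (ys ! j) (ts ! j))"
  using assms by (intro exI[of _ "map (\<lambda>y. SOME t. P y t) ys"]) (auto intro: someI_ex)

lemma generated_subset_sg:
  assumes "finite S" and S: "\<forall>s\<in>S. length s = n"
  shows "generated F n S \<subseteq> sg F n S"
proof -
  obtain ss where ss: "set ss = S" using finite_list[OF assms(1)] by blast
  have "y \<in> generated F n S \<Longrightarrow> \<exists>t \<in> clo F (length ss). y = coordinatewise n t ss" for y
  proof (induction rule: generated.induct)
    case (base s)
    then obtain j where j: "j < length ss" "s = ss ! j" using ss by (auto simp: in_set_conv_nth)
    then have "coordinatewise n (\<lambda>xs. xs ! j) ss = s" using S base by (simp add: coordinatewise_proj)
    then show ?case using clo.proj[OF j(1)] by force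
  next
    case (app m f ys)
    then obtain ts where ts: "length ts = length ys"
      "\<forall>j < length ys. ts ! j \<in> clo F (length ss) \<and> ys ! j = coordinatewise n (ts ! j) ss"
      using choose_list[of ys "\<lambda>y t. t \<in> clo F (length ss) \<and> y = coordinatewise n t ss"] by blast
    have "(\<lambda>xs. f (map (\<lambda>g. g xs) ts)) \<in> clo F (length ss)"
      using app(1,2) ts by (intro clo.app[of m f]) (auto simp: in_set_conv_nth)
    moreover have "ys = map (\<lambda>g. coordinatewise n g ss) ts"
      using ts by (intro nth_equalityI) auto
    ultimately show ?case
      by (intro bexI[of _ "\<lambda>xs. f (map (\<lambda>g. g xs) ts)"]) (simp_all add: coordinatewise_comp)
  qed
  then show ?thesis unfolding sg_def coordinatewise_def using ss by blast
qed

lemma polys_preserve: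
  assumes ops: "\<And>m f ys. (m, f) \<in> G \<Longrightarrow> length ys = m \<Longrightarrow> set ys \<subseteq> C \<Longrightarrow> coordinatewise n f ys \<in> C"
    and constants: "\<And>c. c \<in> B \<Longrightarrow> replicate n c \<in> C"
    and len: "\<And>y. y \<in> C \<Longrightarrow> length y = n"
  shows "p \<in> polys B G k \<Longrightarrow> length ys = k \<Longrightarrow> set ys \<subseteq> C \<Longrightarrow> coordinatewise n p ys \<in> C"
proof (induction p rule: polys.induct)
  case (proj i)
  then have "ys ! i \<in> C" by (auto dest: nth_mem)
  with proj show ?case using len by (simp add: coordinatewise_proj)
next
  case (const c)
  then show ?case using constants by (simp add: coordinatewise_const)
next
  case (app m f gs)
  then show ?case unfolding coordinatewise_comp by (intro ops) auto
qed

lemma polys_preserve_generated: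
  assumes "\<forall>s\<in>S. length s = n" and "\<forall>c\<in>A. replicate n c \<in> generated F n S"
  shows "p \<in> polys A F k \<Longrightarrow> length ys = k \<Longrightarrow> set ys \<subseteq> generated F n S
    \<Longrightarrow> coordinatewise n p ys \<in> generated F n S"
proof (rule polys_preserve[where G = F])
  show "coordinatewise n f ys \<in> generated F n S"
    if "(m, f) \<in> F" "length ys = m" "set ys \<subseteq> generated F n S" for m f ys
    using that by (intro generated.app) auto
qed (use assms length_generated in auto)

lemma induced_polys_preserve_generated:
  assumes "\<forall>s\<in>S. length s = n" and "\<forall>c\<in>A. replicate n c \<in> generated F n S" and "U \<subseteq> A"
  shows "q \<in> polys U (induced_ops A F U) k \<Longrightarrow> length ys = k \<Longrightarrow> set ys \<subseteq> generated F n S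
    \<Longrightarrow> coordinatewise n q ys \<in> generated F n S"
proof (rule polys_preserve[where G = "induced_ops A F U"])
  show "coordinatewise n f ys \<in> generated F n S"
    if "(m, f) \<in> induced_ops A F U" "length ys = m" "set ys \<subseteq> generated F n S" for m f ys
    using that polys_preserve_generated[OF assms(1,2)] by (auto simp: induced_ops_def)
qed (use assms length_generated in auto)

lemma maltsev_tuples_subset:
  assumes maltsev: "\<forall>x\<in>U. \<forall>y\<in>U. m [x, y, y] = x \<and> m [y, y, x] = x"
    and closed: "\<And>y1 y2 y3. y1 \<in> C \<Longrightarrow> y2 \<in> C \<Longrightarrow> y3 \<in> C \<Longrightarrow> coordinatewise n m [y1, y2, y3] \<in> C"
    and near_const: "\<And>c a j. c \<in> U \<Longrightarrow> a \<in> U \<Longrightarrow> j < n \<Longrightarrow> (replicate n c)[j := a] \<in> C"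
    and "n > 0"
  shows "tuples U n \<subseteq> C"
proof
  fix x assume "x \<in> tuples U n"
  then have lx: "length x = n" and xU: "\<And>i. i < n \<Longrightarrow> x ! i \<in> U"
    by (auto simp: tuples_def)
  define c where "c = x ! 0"
  have cU: "c \<in> U" using xU \<open>n > 0\<close> by (simp add: c_def)
  have "(replicate n c)[0 := c] = replicate n c"
    using \<open>n > 0\<close> by (metis list_update_id nth_replicate)
  then have const: "replicate n c \<in> C"
    using near_const[OF cU cU \<open>n > 0\<close>] by simp
  define u where "u k = map (\<lambda>i. if i < k then x ! i else c) [0..<n]" for k
  have "u k \<in> C" if "k \<le> n" for k
    using that
  proof (induction k)
    case 0
    then show ?case using const by (simp add: u_def map_replicate_const)
  next
    case (Suc k)
    then have k: "k < n" by simp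
    have "coordinatewise n m [u k, replicate n c, (replicate n c)[k := x ! k]] = u (Suc k)"
      using Suc(2) maltsev cU xU by (intro nth_equalityI) (auto simp: u_def nth_list_update less_Suc_eq)
    then show ?case
      using closed[OF Suc.IH[OF less_imp_le[OF k]] const near_const[OF cU xU[OF k] k]] by simp
  qed
  moreover have "u n = x" unfolding u_def using lx by (intro nth_equalityI) auto
  ultimately show "x \<in> C" by force
qed

lemma poly_image_tuples_subset:
  assumes closed: "\<And>ys. length ys = length Us \<Longrightarrow> set ys \<subseteq> C \<Longrightarrow> coordinatewise n p ys \<in> C"
    and columns: "\<And>j. j < length Us \<Longrightarrow> tuples (Us ! j) n \<subseteq> C"
  shows "tuples (poly_image p Us) n \<subseteq> C"
proof
  fix x assume x: "x \<in> tuples (poly_image p Us) n"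
  have "\<exists>xs. length xs = length Us \<and> (\<forall>j < length Us. xs ! j \<in> Us ! j) \<and> p xs = x ! i"
    if "i < n" for i
  proof -
    have "x ! i \<in> poly_image p Us" using x that by (auto simp: tuples_def)
    then show ?thesis unfolding poly_image_def by auto
  qed
  then obtain X where X: "\<And>i. i < n \<Longrightarrow>
      length (X i) = length Us \<and> (\<forall>j < length Us. X i ! j \<in> Us ! j) \<and> p (X i) = x ! i"
    by metis
  define ys where "ys = map (\<lambda>j. map (\<lambda>i. X i ! j) [0..<n]) [0..<length Us]"
  have "set ys \<subseteq> C"
    using columns X by (fastforce simp: ys_def tuples_def)
  moreover have "coordinatewise n p ys = x"
  proof (rule nth_equalityI)
    fix i assume "i < length (coordinatewise n p ys)"
    then have i: "i < n" by simp
    then have "map (\<lambda>y. y ! i) ys = X i" using X by (intro nth_equalityI) (auto simp: ys_def)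
    then show "coordinatewise n p ys ! i = x ! i" using X i by simp
  qed (use x in \<open>simp add: tuples_def\<close>)
  ultimately show "x \<in> C" using closed[of ys] by (auto simp: ys_def)
qed

definition near_constant_tuples :: "'a set \<Rightarrow> nat \<Rightarrow> 'a list set" where
  "near_constant_tuples A n = (\<lambda>(c, a, j). (replicate n c)[j := a]) ` (A \<times> A \<times> {..<n})"

lemma near_constant_tuples_subset: "near_constant_tuples A n \<subseteq> tuples A n"
  unfolding near_constant_tuples_def tuples_def
  by (auto dest: subsetD[OF set_update_subset_insert] simp: set_replicate_conv_if split: if_splits)

lemma finite_near_constant_tuples: "finite A \<Longrightarrow> finite (near_constant_tuples A n)"
  by (simp add: near_constant_tuples_def)

lemma card_near_constant_tuples:
  assumes "finite A"
  shows "card (near_constant_tuples A n) \<le> card A ^ 2 * n"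
proof -
  have "card (near_constant_tuples A n) \<le> card (A \<times> A \<times> {..<n})"
    unfolding near_constant_tuples_def using assms by (intro card_image_le) auto
  then show ?thesis by (simp add: card_cartesian_product power2_eq_square)
qed

lemma spread_generated_by_near_constant_tuples:
  assumes "is_algebra A F" and "finite A"
    and "\<forall>U \<in> \<U>. U \<subseteq> A"
    and "\<forall>U \<in> \<U>. has_maltsev U (induced_ops A F U)"
    and "is_spread A F \<U> A" and "n > 0"
  shows "generates A F n (near_constant_tuples A n)"
proof -
  let ?S = "near_constant_tuples A n"
  let ?C = "generated F n ?S"
  have fin: "finite ?S" using finite_near_constant_tuples[OF assms(2)] .
  have len: "\<forall>s\<in>?S. length s = n" using near_constant_tuples_subset by (auto simp: tuples_def)
  have near_const: "(replicate n c)[j := a] \<in> ?C" if "c \<in> A" "a \<in> A" "j < n" for c a j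
    using that by (intro generated.base) (force simp: near_constant_tuples_def)
  have const: "\<forall>c\<in>A. replicate n c \<in> ?C"
    using near_const[of _ _ 0] \<open>n > 0\<close> by (metis list_update_id nth_replicate)
  obtain p Us where p: "p \<in> polys A F (length Us)" and Us: "set Us \<subseteq> \<U>"
    and A: "A = poly_image p Us"
    using assms(5) unfolding is_spread_def by blast
  have "tuples (Us ! j) n \<subseteq> ?C" if "j < length Us" for j
  proof -
    have U: "Us ! j \<in> \<U>" using that Us by auto
    then obtain m where m: "m \<in> polys (Us ! j) (induced_ops A F (Us ! j)) 3"
      and maltsev: "\<forall>x\<in>Us ! j. \<forall>y\<in>Us ! j. m [x, y, y] = x \<and> m [y, y, x] = x"
      using assms(4) unfolding has_maltsev_def by blast
    show ?thesis
      using assms(3) U \<open>n > 0\<close>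
      by (intro maltsev_tuples_subset[OF maltsev]
          induced_polys_preserve_generated[OF len const _ m] near_const) auto
  qed
  then have "tuples (poly_image p Us) n \<subseteq> ?C"
    by (intro poly_image_tuples_subset polys_preserve_generated[OF len const p])
  then have "tuples A n \<subseteq> ?C" using A by simp
  then show ?thesis
    unfolding generates_def
    using near_constant_tuples_subset sg_subset_tuples[OF assms(1)] generated_subset_sg[OF fin len]
    by blast
qed

theorem corollary5p3:
  fixes A :: "'a set" and F :: "(nat \<times> ('a list \<Rightarrow> 'a)) set" and \<U> :: "'a set set"
  assumes "is_algebra A F" and "finite A"
    and "\<forall>U \<in> \<U>. U \<subseteq> A"
    and "\<forall>U \<in> \<U>. has_maltsev U (induced_ops A F U)"
    and "is_spread A F \<U> A"
  shows "(\<lambda>n. real (d_gen A F n)) \<in> O(\<lambda>n. real n)"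
proof (rule bigoI[of _ "real (card A ^ 2)"])
  have bound: "d_gen A F n \<le> card A ^ 2 * n" if "n > 0" for n
  proof -
    have "d_gen A F n \<le> card (near_constant_tuples A n)"
      unfolding d_gen_def
      using spread_generated_by_near_constant_tuples[OF assms that]
        finite_near_constant_tuples[OF assms(2)]
      by (intro Least_le) blast
    also have "\<dots> \<le> card A ^ 2 * n" using card_near_constant_tuples[OF assms(2)] .
    finally show ?thesis .
  qed
  show "eventually (\<lambda>n. norm (real (d_gen A F n)) \<le> real (card A ^ 2) * norm (real n)) at_top"
    using eventually_gt_at_top[of 0]
  proof eventually_elim
    case (elim n)
    then have "real (d_gen A F n) \<le> real (card A ^ 2 * n)" using bound of_nat_le_iff by blast
    then show ?case by simp
  qed
qed

end
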